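(* Let $T$ be extremal in $\mathcal{T}_\pi$ and let $f$ be an eigenvector of $L(T)$ corresponding to $\lambda(T)$. If $u,v\in V(T)$ satisfy $|f(v)|>|f(u)|$, then $d(v)\ge d(u)$.
   Context: For a graph $G=(V,E)$ the Laplacian is $L(G)=D(G)-A(G)$ ($D$ the diagonal degree matrix, $A$ the adjacency matrix), $\lambda(G)$ denotes its largest eigenvalue, and $d(v)$ is the degree of $v$. $\mathcal{T}_\pi$ is the set of all trees with degree sequence $\pi$; a tree in $\mathcal{T}_\pi$ is extremal if it has the largest value of $\lambda$ among all trees in $\mathcal{T}_\pi$. *)

theory Defs
  imports Complex_Main "HOL-Library.Multiset"
begin

definition simple_graph :: "'a set \<Rightarrow> 'a set set \<Rightarrow> bool" where
  "simple_graph V E \<longleftrightarrow> finite V \<and> (\<forall>e\<in>E. e \<subseteq> V \<and> card e = 2)"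

definition adj :: "'a set set \<Rightarrow> 'a \<Rightarrow> 'a \<Rightarrow> bool" where
  "adj E x y \<longleftrightarrow> {x, y} \<in> E"

definition connected_graph :: "'a set \<Rightarrow> 'a set set \<Rightarrow> bool" where
  "connected_graph V E \<longleftrightarrow> (\<forall>x\<in>V. \<forall>y\<in>V. (adj E)\<^sup>*\<^sup>* x y)"

definition is_tree :: "'a set \<Rightarrow> 'a set set \<Rightarrow> bool" where
  "is_tree V E \<longleftrightarrow> simple_graph V E \<and> V \<noteq> {} \<and> connected_graph V E
     \<and> card E = card V - 1"

definition degree :: "'a set \<Rightarrow> 'a set set \<Rightarrow> 'a \<Rightarrow> nat" where
  "degree V E v = card {u \<in> V. {u, v} \<in> E}"

definition degree_seq :: "'a set \<Rightarrow> 'a set set \<Rightarrow> nat multiset" where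
  "degree_seq V E = image_mset (degree V E) (mset_set V)"

definition laplacian :: "'a set \<Rightarrow> 'a set set \<Rightarrow> 'a \<Rightarrow> 'a \<Rightarrow> real" where
  "laplacian V E x y = (if x = y then real (degree V E x) else 0) - (if {x, y} \<in> E then 1 else 0)"

definition lap_eigenvector :: "'a set \<Rightarrow> 'a set set \<Rightarrow> real \<Rightarrow> ('a \<Rightarrow> real) \<Rightarrow> bool" where
  "lap_eigenvector V E \<mu> f \<longleftrightarrow> (\<exists>x\<in>V. f x \<noteq> 0) \<and>
     (\<forall>x\<in>V. (\<Sum>y\<in>V. laplacian V E x y * f y) = \<mu> * f x)"

definition lap_eigenvalue :: "'a set \<Rightarrow> 'a set set \<Rightarrow> real \<Rightarrow> bool" where
  "lap_eigenvalue V E \<mu> \<longleftrightarrow> (\<exists>f. lap_eigenvector V E \<mu> f)"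

text \<open>Largest Laplacian eigenvalue (the Laplacian is real symmetric, so all eigenvalues are real).\<close>
definition lap_lambda :: "'a set \<Rightarrow> 'a set set \<Rightarrow> real" where
  "lap_lambda V E = Max {\<mu>. lap_eigenvalue V E \<mu>}"

text \<open>Extremal tree in T_pi: maximal lambda among all trees with the same degree sequence
  (trees with a given degree sequence all have |V| vertices, so up to isomorphism
  they live on the same vertex set V).\<close>
definition extremal_tree :: "'a set \<Rightarrow> 'a set set \<Rightarrow> bool" where
  "extremal_tree V E \<longleftrightarrow> is_tree V E \<and>
     (\<forall>E'. is_tree V E' \<and> degree_seq V E' = degree_seq V E \<longrightarrow> lap_lambda V E' \<le> lap_lambda V E)"

end

theory Submission
  imports Defs "HOL-Analysis.Function_Topology" "HOL-Combinatorics.Transposition"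
    "Jordan_Normal_Form.Char_Poly"
begin

(* Proof idea (contraposition).  Suppose d(v) < d(u) although |f v| > |f u|, and write
   a = |f| and S(E) = sum over edges {x,y} of E of (a x + a y)^2.

   (1) lambda(T) * |f|^2 = f^T L f = sum over edges of (f x - f y)^2 <= S(E).
   (2) Choose a neighbour p of u lying on the u-v path and a set W of d(u) - d(v)
       neighbours of u, avoiding p, v and the neighbours of v.  Re-attaching every
       w in W from u to v gives a tree T' with the same degree sequence (the degrees
       of u and v are swapped), and S(E') > S(E) because a v > a u.
   (3) T' is bipartite; flipping the sign of a on one colour class gives g with
       |g|^2 = |f|^2 and g^T L' g = S(E').  By the Rayleigh bound
       S(E') <= lambda(T') * |f|^2 <= lambda(T) * |f|^2 by extremality of T.
   Combining, lambda(T) |f|^2 <= S(E) < S(E') <= lambda(T) |f|^2, a contradiction. *)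

hide_const (open) Polynomial.degree

section \<open>Symmetric matrices indexed by a finite set\<close>

text \<open>A matrix over the index set V is a function M :: 'a \<Rightarrow> 'a \<Rightarrow> real; vectors are
  functions 'a \<Rightarrow> real, of which only the values on V matter.\<close>

definition quad_form :: "'a set \<Rightarrow> ('a \<Rightarrow> 'a \<Rightarrow> real) \<Rightarrow> ('a \<Rightarrow> real) \<Rightarrow> real" where
  "quad_form V M g = (\<Sum>x\<in>V. \<Sum>y\<in>V. M x y * g x * g y)"

definition sq_norm :: "'a set \<Rightarrow> ('a \<Rightarrow> real) \<Rightarrow> real" where
  "sq_norm V g = (\<Sum>x\<in>V. (g x)^2)"

definition eigvec :: "'a set \<Rightarrow> ('a \<Rightarrow> 'a \<Rightarrow> real) \<Rightarrow> real \<Rightarrow> ('a \<Rightarrow> real) \<Rightarrow> bool" where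
  "eigvec V M \<mu> g \<longleftrightarrow> (\<exists>x\<in>V. g x \<noteq> 0) \<and> (\<forall>x\<in>V. (\<Sum>y\<in>V. M x y * g y) = \<mu> * g x)"

lemma lap_eigenvector_eigvec: "lap_eigenvector V E \<mu> f \<longleftrightarrow> eigvec V (laplacian V E) \<mu> f"
  unfolding lap_eigenvector_def eigvec_def ..

lemma sq_norm_nonneg: "sq_norm V g \<ge> 0"
  unfolding sq_norm_def by (simp add: sum_nonneg)

lemma eigvec_quad_form: "eigvec V M \<mu> g \<Longrightarrow> quad_form V M g = \<mu> * sq_norm V g"
proof -
  assume e: "eigvec V M \<mu> g"
  have "quad_form V M g = (\<Sum>x\<in>V. g x * (\<Sum>y\<in>V. M x y * g y))"
    unfolding quad_form_def by (simp add: sum_distrib_left algebra_simps)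
  also have "\<dots> = (\<Sum>x\<in>V. g x * (\<mu> * g x))" using e unfolding eigvec_def by simp
  finally show ?thesis
    unfolding sq_norm_def by (simp add: sum_distrib_left power2_eq_square algebra_simps)
qed

text \<open>There are only finitely many eigenvalues: each is a root of the characteristic
  polynomial of the matrix obtained by listing V.\<close>
lemma finite_eigenvalues:
  assumes "finite V"
  shows "finite {\<mu>. \<exists>g. eigvec V M \<mu> g}"
proof -
  obtain xs where xs: "set xs = V" "distinct xs" using finite_distinct_list[OF assms] by blast
  define n where "n = length xs"
  define A where "A = mat n n (\<lambda>(i,j). M (xs!i) (xs!j))"
  have A: "A \<in> carrier_mat n n" unfolding A_def by simp
  have sum_list_index: "(\<Sum>j<n. h (xs ! j)) = (\<Sum>y\<in>V. h y)" for h :: "'a \<Rightarrow> real"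
  proof -
    have "inj_on (nth xs) {..<n}" using xs(2) unfolding n_def by (simp add: inj_on_nth)
    moreover have "nth xs ` {..<n} = V" using xs(1) unfolding n_def by (auto simp: in_set_conv_nth)
    ultimately show ?thesis using sum.reindex[of "nth xs" "{..<n}" h] by simp
  qed
  have "{\<mu>. \<exists>g. eigvec V M \<mu> g} \<subseteq> {k. poly (char_poly A) k = 0}"
  proof
    fix \<mu> assume "\<mu> \<in> {\<mu>. \<exists>g. eigvec V M \<mu> g}"
    then obtain g where g: "eigvec V M \<mu> g" by blast
    define w where "w = vec n (\<lambda>i. g (xs!i))"
    have "eigenvector A w \<mu>"
      unfolding eigenvector_def
    proof (intro conjI)
      show "w \<in> carrier_vec (dim_row A)" using A unfolding w_def by simp
      from g obtain x where x: "x \<in> V" "g x \<noteq> 0" unfolding eigvec_def by blast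
      then obtain i where i: "i < n" "xs ! i = x"
        using xs unfolding n_def by (auto simp: in_set_conv_nth)
      show "w \<noteq> 0\<^sub>v (dim_row A)"
      proof
        assume "w = 0\<^sub>v (dim_row A)"
        then have "w $ i = 0" using i A by simp
        then show False using i x unfolding w_def by simp
      qed
      show "A *\<^sub>v w = \<mu> \<cdot>\<^sub>v w"
      proof (rule eq_vecI)
        show "dim_vec (A *\<^sub>v w) = dim_vec (\<mu> \<cdot>\<^sub>v w)" using A unfolding w_def by simp
        fix i assume "i < dim_vec (\<mu> \<cdot>\<^sub>v w)"
        then have i: "i < n" unfolding w_def by simp
        have "(A *\<^sub>v w) $ i = (\<Sum>j<n. M (xs!i) (xs!j) * g (xs!j))"
          using i unfolding A_def w_def
          by (simp add: mult_mat_vec_def scalar_prod_def lessThan_atLeast0)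
        also have "\<dots> = (\<Sum>y\<in>V. M (xs!i) y * g y)" by (rule sum_list_index)
        also have "\<dots> = \<mu> * g (xs!i)" using g i xs unfolding eigvec_def n_def by auto
        finally show "(A *\<^sub>v w) $ i = (\<mu> \<cdot>\<^sub>v w) $ i" using i unfolding w_def by simp
      qed
    qed
    then have "eigenvalue A \<mu>" unfolding eigenvalue_def by blast
    then show "\<mu> \<in> {k. poly (char_poly A) k = 0}" using eigenvalue_root_char_poly[OF A] by simp
  qed
  moreover have "char_poly A \<noteq> 0"
    using degree_monic_char_poly[OF A] by auto
  ultimately show ?thesis using poly_roots_finite finite_subset by blast
qed

text \<open>The Rayleigh quotient attains its supremum on the unit sphere (a compact set, after
  forgetting the irrelevant coordinates outside V).\<close>
lemma rayleigh_sup_attained: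
  assumes fin: "finite V" and ne: "V \<noteq> {}"
  shows "\<exists>g. sq_norm V g = 1 \<and> (\<forall>h. sq_norm V h = 1 \<longrightarrow> quad_form V M h \<le> quad_form V M g)"
proof -
  define K :: "('a \<Rightarrow> real) set" where
    "K = PiE UNIV (\<lambda>x. if x \<in> V then {-1..(1::real)} else {0})"
  define S where "S = K \<inter> {g. sq_norm V g = 1}"
  have "compactin (product_topology (\<lambda>i. euclidean) UNIV) K"
    unfolding K_def compactin_PiE by auto
  then have "compact K" using euclidean_product_topology by (metis compactin_euclidean_iff)
  moreover have "continuous_on UNIV (sq_norm V)"
    unfolding sq_norm_def
    by (intro continuous_on_sum continuous_on_power continuous_on_product_coordinates)
  then have "closed {g. sq_norm V g = 1}" by (intro closed_Collect_eq) auto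
  ultimately have cS: "compact S" unfolding S_def by blast
  have "continuous_on UNIV (quad_form V M)"
    unfolding quad_form_def
    by (intro continuous_on_sum continuous_on_mult continuous_on_const continuous_on_product_coordinates)
  then have cq: "continuous_on S (quad_form V M)" by (rule continuous_on_subset) simp
  have restrict: "(\<lambda>x. if x \<in> V then h x else 0) \<in> S \<and>
      quad_form V M (\<lambda>x. if x \<in> V then h x else 0) = quad_form V M h"
    if h: "sq_norm V h = 1" for h
  proof -
    have "\<bar>h x\<bar> \<le> 1" if "x \<in> V" for x
    proof -
      have "(h x)^2 \<le> 1" using h member_le_sum[of x V "\<lambda>x. (h x)^2"] fin that
        unfolding sq_norm_def by simp
      then show ?thesis by (simp add: abs_square_le_1)
    qed
    then have "(\<lambda>x. if x \<in> V then h x else 0) \<in> K" unfolding K_def by (auto simp: abs_le_iff)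
    moreover have "sq_norm V (\<lambda>x. if x \<in> V then h x else 0) = sq_norm V h"
      unfolding sq_norm_def by (rule sum.cong) auto
    moreover have "quad_form V M (\<lambda>x. if x \<in> V then h x else 0) = quad_form V M h"
      unfolding quad_form_def by (intro sum.cong) auto
    ultimately show ?thesis using h unfolding S_def by simp
  qed
  obtain x0 where x0: "x0 \<in> V" using ne by blast
  have "sq_norm V (\<lambda>x. if x = x0 then 1 else 0) = (\<Sum>x\<in>V. if x = x0 then 1 else 0)"
    unfolding sq_norm_def by (rule sum.cong) auto
  also have "\<dots> = 1" using x0 fin by simp
  finally have "S \<noteq> {}" using restrict by blast
  then obtain g where g: "g \<in> S" "\<forall>h\<in>S. quad_form V M h \<le> quad_form V M g"
    using compact_attains_sup[OF compact_continuous_image[OF cq cS]] by auto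
  have "sq_norm V g = 1" using g(1) unfolding S_def by simp
  moreover have "quad_form V M h \<le> quad_form V M g" if "sq_norm V h = 1" for h
    using restrict[OF that] g(2) by metis
  ultimately show ?thesis by blast
qed

lemma rayleigh_max_bound:
  assumes fin: "finite V" and ne: "V \<noteq> {}"
  shows "\<exists>g. sq_norm V g = 1 \<and> (\<forall>h. quad_form V M h \<le> quad_form V M g * sq_norm V h)"
proof -
  obtain g where g: "sq_norm V g = 1" "\<And>h. sq_norm V h = 1 \<Longrightarrow> quad_form V M h \<le> quad_form V M g"
    using rayleigh_sup_attained[OF fin ne] by blast
  have "quad_form V M h \<le> quad_form V M g * sq_norm V h" for h
  proof (cases "sq_norm V h = 0")
    case True
    then have "\<forall>x\<in>V. h x = 0" unfolding sq_norm_def using fin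
      by (subst (asm) sum_nonneg_eq_0_iff) auto
    then show ?thesis using True unfolding quad_form_def by simp
  next
    case False
    define c where "c = sqrt (sq_norm V h)"
    have c: "c > 0" "c^2 = sq_norm V h" using False sq_norm_nonneg[of V h] unfolding c_def by auto
    have "sq_norm V (\<lambda>x. h x / c) = sq_norm V h / c^2"
      unfolding sq_norm_def by (simp add: power_divide sum_divide_distrib)
    then have "quad_form V M (\<lambda>x. h x / c) \<le> quad_form V M g" using c False g(2) by simp
    moreover have "quad_form V M (\<lambda>x. h x / c) = quad_form V M h / c^2"
      unfolding quad_form_def by (simp add: sum_divide_distrib power2_eq_square)
    ultimately have "quad_form V M h / sq_norm V h \<le> quad_form V M g" using c by simp
    moreover have "sq_norm V h > 0" using False sq_norm_nonneg[of V h] by simp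
    ultimately show ?thesis by (simp add: pos_divide_le_eq mult.commute)
  qed
  then show ?thesis using g(1) by blast
qed

lemma nonpos_quadratic_linear_coeff:
  fixes a b :: real
  assumes "\<And>t. a * t + b * t^2 \<le> 0"
  shows "a = 0"
proof (rule ccontr)
  assume a: "a \<noteq> 0"
  define c where "c = \<bar>b\<bar> + 1"
  have c: "c > 0" "c > \<bar>b\<bar>" unfolding c_def by auto
  have "a * (a/c) + b * (a/c)^2 = a^2/c * (1 + b/c)"
    using c by (simp add: field_simps power2_eq_square)
  moreover have "1 + b/c > 0" using c by (simp add: field_simps abs_less_iff)
  moreover have "a^2/c > 0" using a c by simp
  ultimately have "a * (a/c) + b * (a/c)^2 > 0" by (metis mult_pos_pos)
  with assms[of "a/c"] show False by simp
qed

lemma quad_form_perturb: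
  assumes fin: "finite V" and z: "z \<in> V" and sym: "\<And>x y. M x y = M y x"
  shows "quad_form V M (\<lambda>x. g x + (if x = z then t else 0))
       = quad_form V M g + 2 * t * (\<Sum>y\<in>V. M z y * g y) + t^2 * M z z"
proof -
  define e where "e x = (if x = z then t else (0::real))" for x
  have "quad_form V M (\<lambda>x. g x + e x)
      = quad_form V M g + (\<Sum>x\<in>V. \<Sum>y\<in>V. M x y * g x * e y) + (\<Sum>x\<in>V. \<Sum>y\<in>V. M x y * e x * g y)
        + quad_form V M e"
    unfolding quad_form_def by (simp add: sum.distrib algebra_simps)
  also have "(\<Sum>x\<in>V. \<Sum>y\<in>V. M x y * g x * e y) = (\<Sum>x\<in>V. M x z * g x * t)"
    using fin z unfolding e_def by (simp add: if_distrib[of "\<lambda>s. _ * s"] cong: if_cong)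
  also have "(\<Sum>x\<in>V. \<Sum>y\<in>V. M x y * e x * g y)
      = (\<Sum>x\<in>V. if x = z then (\<Sum>y\<in>V. M z y * t * g y) else 0)"
    unfolding e_def by (rule sum.cong) auto
  also have "\<dots> = (\<Sum>y\<in>V. M z y * t * g y)" using fin z by simp
  also have "quad_form V M e
      = (\<Sum>x\<in>V. if x = z then (\<Sum>y\<in>V. if y = z then t^2 * M z z else 0) else 0)"
    unfolding quad_form_def e_def by (auto simp: power2_eq_square intro!: sum.cong)
  also have "\<dots> = t^2 * M z z" using fin z by simp
  finally show ?thesis unfolding e_def by (simp add: sum_distrib_left sym mult_ac)
qed

lemma sq_norm_perturb:
  assumes fin: "finite V" and z: "z \<in> V"
  shows "sq_norm V (\<lambda>x. g x + (if x = z then t else 0)) = sq_norm V g + 2 * t * g z + t^2"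
proof -
  have "(\<lambda>x. (g x + (if x = z then t else 0))^2)
      = (\<lambda>x. (g x)^2 + (if x = z then 2 * t * g x + t^2 else 0))"
    by (auto simp: power2_eq_square algebra_simps)
  then have "sq_norm V (\<lambda>x. g x + (if x = z then t else 0))
      = sq_norm V g + (\<Sum>x\<in>V. if x = z then 2 * t * g x + t^2 else 0)"
    unfolding sq_norm_def by (simp only: sum.distrib)
  then show ?thesis using fin z by simp
qed

text \<open>A maximiser of the Rayleigh quotient is stationary, hence an eigenvector.\<close>
lemma rayleigh_maximiser_eigvec:
  assumes fin: "finite V" and sym: "\<And>x y. M x y = M y x"
    and g: "sq_norm V g = 1" and max: "\<And>h. quad_form V M h \<le> quad_form V M g * sq_norm V h"
  shows "eigvec V M (quad_form V M g) g"
proof -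
  let ?\<mu> = "quad_form V M g"
  have "(\<Sum>y\<in>V. M z y * g y) = ?\<mu> * g z" if z: "z \<in> V" for z
  proof -
    have "(2 * (\<Sum>y\<in>V. M z y * g y) - ?\<mu> * (2 * g z)) * t + (M z z - ?\<mu>) * t^2 \<le> 0" for t
      using max[of "\<lambda>x. g x + (if x = z then t else 0)"] g
      unfolding quad_form_perturb[OF fin z sym] sq_norm_perturb[OF fin z]
      by (simp add: algebra_simps)
    from nonpos_quadratic_linear_coeff[OF this] show ?thesis by simp
  qed
  moreover have "\<exists>x\<in>V. g x \<noteq> 0"
  proof (rule ccontr)
    assume "\<not> (\<exists>x\<in>V. g x \<noteq> 0)"
    then have "sq_norm V g = 0" unfolding sq_norm_def by simp
    with g show False by simp
  qed
  ultimately show ?thesis unfolding eigvec_def by blast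
qed


section \<open>The Laplacian quadratic form of a simple graph\<close>

lemma simple_graph_no_loop: "simple_graph V E \<Longrightarrow> {x, x} \<notin> E"
  unfolding simple_graph_def by fastforce

lemma simple_graph_edge_in: "simple_graph V E \<Longrightarrow> {x, y} \<in> E \<Longrightarrow> x \<in> V \<and> y \<in> V"
  unfolding simple_graph_def by blast

lemma simple_graph_finite_edges: "simple_graph V E \<Longrightarrow> finite E"
  unfolding simple_graph_def by (meson Pow_iff finite_Pow_iff finite_subset subsetI)

lemma laplacian_sym: "laplacian V E x y = laplacian V E y x"
  unfolding laplacian_def by (auto simp: insert_commute)

lemma ordered_pair_sum:
  fixes h :: "'a \<Rightarrow> 'a \<Rightarrow> real"
  assumes sg: "simple_graph V E" and hs: "\<And>x y. {x, y} \<in> E \<Longrightarrow> h x y = s {x, y}"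
  shows "(\<Sum>x\<in>V. \<Sum>y\<in>V. if {x, y} \<in> E then h x y else 0) = 2 * (\<Sum>e\<in>E. s e)"
proof -
  have fV: "finite V" using sg unfolding simple_graph_def by simp
  have fE: "finite E" using simple_graph_finite_edges[OF sg] .
  define P where "P = {p \<in> V \<times> V. {fst p, snd p} \<in> E}"
  have "(\<Sum>x\<in>V. \<Sum>y\<in>V. if {x, y} \<in> E then h x y else 0)
      = (\<Sum>p\<in>V \<times> V. if {fst p, snd p} \<in> E then h (fst p) (snd p) else 0)"
    by (simp add: sum.cartesian_product case_prod_beta)
  also have "\<dots> = (\<Sum>p\<in>P. h (fst p) (snd p))"
    unfolding P_def using fV by (simp add: sum.inter_filter)
  also have "\<dots> = (\<Sum>e\<in>E. \<Sum>p\<in>{p \<in> P. {fst p, snd p} = e}. h (fst p) (snd p))"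
    by (rule sum.group[symmetric]) (use fV fE in \<open>auto simp: P_def\<close>)
  also have "\<dots> = (\<Sum>e\<in>E. 2 * s e)"
  proof (rule sum.cong)
    fix e assume e: "e \<in> E"
    then obtain a b where ab: "e = {a, b}" "a \<noteq> b"
      using sg unfolding simple_graph_def by (meson card_2_iff)
    have "a \<in> V" "b \<in> V" using simple_graph_edge_in[OF sg] e ab by auto
    then have "{p \<in> P. {fst p, snd p} = e} = {(a, b), (b, a)}"
      using ab e unfolding P_def by (auto simp: doubleton_eq_iff insert_commute)
    then have "(\<Sum>p\<in>{p \<in> P. {fst p, snd p} = e}. h (fst p) (snd p)) = h a b + h b a"
      using ab by simp
    also have "\<dots> = 2 * s e" using hs[of a b] hs[of b a] e ab by (simp add: insert_commute)
    finally show "(\<Sum>p\<in>{p \<in> P. {fst p, snd p} = e}. h (fst p) (snd p)) = 2 * s e" .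
  qed simp
  finally show ?thesis by (simp add: sum_distrib_left)
qed

lemma degree_as_sum:
  assumes "finite V"
  shows "real (degree V E x) = (\<Sum>y\<in>V. if {x, y} \<in> E then 1 else 0)"
proof -
  have "{y \<in> V. {y, x} \<in> E} = {y \<in> V. {x, y} \<in> E}" by (auto simp: insert_commute)
  then have "real (degree V E x) = (\<Sum>y\<in>{y \<in> V. {x, y} \<in> E}. (1::real))"
    unfolding Defs.degree_def by simp
  also have "\<dots> = (\<Sum>y\<in>V. if {x, y} \<in> E then 1 else 0)"
    by (rule sum.inter_filter[OF assms])
  finally show ?thesis .
qed

lemma handshake:
  assumes sg: "simple_graph V E"
  shows "(\<Sum>x\<in>V. real (degree V E x)) = 2 * real (card E)"
proof -
  have fV: "finite V" using sg unfolding simple_graph_def by simp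
  have "(\<Sum>x\<in>V. real (degree V E x)) = (\<Sum>x\<in>V. \<Sum>y\<in>V. if {x, y} \<in> E then 1 else 0)"
    using degree_as_sum[OF fV] by simp
  also have "\<dots> = 2 * (\<Sum>e\<in>E. 1)"
    by (rule ordered_pair_sum[OF sg]) simp
  finally show ?thesis by simp
qed

text \<open>The classical identity  g^T L g = sum over edges {x,y} of (g x - g y)^2,  written
  over ordered pairs (so with a factor 2).\<close>
lemma laplacian_quad_form:
  assumes sg: "simple_graph V E"
  shows "2 * quad_form V (laplacian V E) g
       = (\<Sum>x\<in>V. \<Sum>y\<in>V. if {x, y} \<in> E then (g x - g y)^2 else 0)"
proof -
  have fV: "finite V" using sg unfolding simple_graph_def by simp
  define a where "a x y = (if {x, y} \<in> E then 1 else (0::real))" for x y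
  have row: "(\<Sum>y\<in>V. laplacian V E x y * g x * g y)
      = (\<Sum>y\<in>V. a x y * g x * g x) - (\<Sum>y\<in>V. a x y * g x * g y)" if x: "x \<in> V" for x
  proof -
    have "(\<Sum>y\<in>V. laplacian V E x y * g x * g y)
        = (\<Sum>y\<in>V. (if y = x then real (degree V E x) * g x * g x else 0))
          - (\<Sum>y\<in>V. a x y * g x * g y)"
      unfolding laplacian_def a_def sum_subtractf[symmetric]
      by (rule sum.cong) (auto simp: algebra_simps)
    also have "(\<Sum>y\<in>V. (if y = x then real (degree V E x) * g x * g x else 0))
        = real (degree V E x) * g x * g x"
      using x fV by simp
    also have "real (degree V E x) = (\<Sum>y\<in>V. a x y)"
      unfolding a_def using degree_as_sum[OF fV] by simp
    finally show ?thesis by (simp add: sum_distrib_right)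
  qed
  have "quad_form V (laplacian V E) g
      = (\<Sum>x\<in>V. \<Sum>y\<in>V. a x y * g x * g x) - (\<Sum>x\<in>V. \<Sum>y\<in>V. a x y * g x * g y)"
    unfolding quad_form_def using row by (simp add: sum_subtractf)
  moreover have "(\<Sum>x\<in>V. \<Sum>y\<in>V. a x y * g y * g y) = (\<Sum>x\<in>V. \<Sum>y\<in>V. a x y * g x * g x)"
    by (subst sum.swap) (simp add: a_def insert_commute)
  moreover have "(if {x, y} \<in> E then (g x - g y)^2 else 0)
      = a x y * g x * g x + a x y * g y * g y - 2 * (a x y * g x * g y)" for x y
    unfolding a_def by (simp add: power2_eq_square algebra_simps)
  ultimately show ?thesis by (simp add: sum.distrib sum_subtractf sum_distrib_left)
qed

definition edge_energy :: "'a set set \<Rightarrow> ('a \<Rightarrow> real) \<Rightarrow> real" where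
  "edge_energy E a = (\<Sum>e\<in>E. (\<Sum>z\<in>e. a z)^2)"

lemma edge_energy_ordered_pairs:
  assumes sg: "simple_graph V E"
  shows "(\<Sum>x\<in>V. \<Sum>y\<in>V. if {x, y} \<in> E then (a x + a y)^2 else 0) = 2 * edge_energy E a"
  unfolding edge_energy_def
proof (rule ordered_pair_sum[OF sg])
  fix x y assume "{x, y} \<in> E"
  then have "x \<noteq> y" using simple_graph_no_loop[OF sg, of x] by auto
  then show "(a x + a y)^2 = (\<Sum>z\<in>{x, y}. a z)^2" by simp
qed

text \<open>Since (g x - g y)^2 \<le> (|g x| + |g y|)^2, the Laplacian form is bounded by the energy
  of |g|.\<close>
lemma laplacian_quad_form_le_energy:
  assumes sg: "simple_graph V E"
  shows "quad_form V (laplacian V E) g \<le> edge_energy E (\<lambda>x. \<bar>g x\<bar>)"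
proof -
  have "(g x - g y)^2 \<le> (\<bar>g x\<bar> + \<bar>g y\<bar>)^2" for x y
    using power_mono[OF abs_triangle_ineq4[of "g x" "g y"], of 2] by simp
  then have "(\<Sum>x\<in>V. \<Sum>y\<in>V. if {x, y} \<in> E then (g x - g y)^2 else 0)
      \<le> (\<Sum>x\<in>V. \<Sum>y\<in>V. if {x, y} \<in> E then (\<bar>g x\<bar> + \<bar>g y\<bar>)^2 else 0)"
    by (intro sum_mono) simp
  then show ?thesis
    unfolding laplacian_quad_form[OF sg, symmetric] edge_energy_ordered_pairs[OF sg] by simp
qed

text \<open>For a proper two-colouring c, giving a the sign prescribed by the colour attains the
  energy: adjacent vertices get opposite signs.\<close>
lemma laplacian_quad_form_signed:
  assumes sg: "simple_graph V E" and c: "\<And>x y. {x, y} \<in> E \<Longrightarrow> c x \<noteq> c y"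
  shows "quad_form V (laplacian V E) (\<lambda>x. if c x then a x else - a x) = edge_energy E a"
proof -
  let ?g = "\<lambda>x. if c x then a x else - a x"
  have "(if {x, y} \<in> E then (?g x - ?g y)^2 else 0) = (if {x, y} \<in> E then (a x + a y)^2 else 0)"
    for x y
    using c[of x y] by (cases "c x") (auto simp: power2_eq_square algebra_simps)
  then show ?thesis
    using laplacian_quad_form[OF sg, of ?g] edge_energy_ordered_pairs[OF sg, of a] by simp
qed

lemma laplacian_rayleigh:
  assumes sg: "simple_graph V E" and ne: "V \<noteq> {}"
  shows "quad_form V (laplacian V E) h \<le> lap_lambda V E * sq_norm V h"
proof -
  have fV: "finite V" using sg unfolding simple_graph_def by simp
  obtain g where g: "sq_norm V g = 1"
    "\<And>h. quad_form V (laplacian V E) h \<le> quad_form V (laplacian V E) g * sq_norm V h"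
    using rayleigh_max_bound[OF fV ne] by blast
  have "lap_eigenvalue V E (quad_form V (laplacian V E) g)"
    using rayleigh_maximiser_eigvec[OF fV laplacian_sym g]
    unfolding lap_eigenvalue_def lap_eigenvector_eigvec by blast
  moreover have "finite {\<mu>. lap_eigenvalue V E \<mu>}"
    using finite_eigenvalues[OF fV, of "laplacian V E"]
    unfolding lap_eigenvalue_def lap_eigenvector_eigvec .
  ultimately have "quad_form V (laplacian V E) g \<le> lap_lambda V E"
    unfolding lap_lambda_def by (intro Max_ge) auto
  then have "quad_form V (laplacian V E) g * sq_norm V h \<le> lap_lambda V E * sq_norm V h"
    by (rule mult_right_mono) (rule sq_norm_nonneg)
  then show ?thesis using g(2)[of h] by linarith
qed


section \<open>Trees: leaves and two-colourings\<close>

definition nbrs :: "'a set \<Rightarrow> 'a set set \<Rightarrow> 'a \<Rightarrow> 'a set" where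
  "nbrs V E x = {z \<in> V. {z, x} \<in> E}"

lemma degree_nbrs: "degree V E x = card (nbrs V E x)"
  unfolding Defs.degree_def nbrs_def ..

lemma finite_nbrs: "finite V \<Longrightarrow> finite (nbrs V E x)"
  unfolding nbrs_def by simp

lemma adj_rtranclp_sym: "(adj E)\<^sup>*\<^sup>* x y \<Longrightarrow> (adj E)\<^sup>*\<^sup>* y x"
proof -
  have "symp (adj E)" unfolding adj_def by (auto intro: sympI simp: insert_commute)
  then show "(adj E)\<^sup>*\<^sup>* x y \<Longrightarrow> (adj E)\<^sup>*\<^sup>* y x" by (metis symp_rtranclp sympD)
qed

lemma tree_has_neighbour:
  assumes t: "is_tree V E" and x: "x \<in> V" and z: "z \<in> V" "z \<noteq> x"
  shows "nbrs V E x \<noteq> {}"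
proof -
  have sg: "simple_graph V E" using t unfolding is_tree_def by simp
  have "(adj E)\<^sup>*\<^sup>* x z" using t x z unfolding is_tree_def connected_graph_def by blast
  then obtain y where "adj E x y" using z by (metis converse_rtranclpE)
  then have "{y, x} \<in> E" unfolding adj_def by (simp add: insert_commute)
  then have "y \<in> nbrs V E x" using simple_graph_edge_in[OF sg] unfolding nbrs_def by blast
  then show ?thesis by blast
qed

text \<open>A tree on at least two vertices has a leaf: otherwise all degrees are \<ge> 2 and the
  handshake lemma gives |E| \<ge> |V|.\<close>
lemma tree_leaf:
  assumes t: "is_tree V E" and c: "card V \<ge> 2"
  shows "\<exists>x y. x \<in> V \<and> nbrs V E x = {y}"
proof (rule ccontr)
  assume no_leaf: "\<not> ?thesis"
  have sg: "simple_graph V E" and fV: "finite V" and cE: "card E = card V - 1"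
    using t unfolding is_tree_def simple_graph_def by auto
  have "degree V E x \<ge> 2" if x: "x \<in> V" for x
  proof -
    obtain z where z: "z \<in> V" "z \<noteq> x"
      using c x by (metis card_le_Suc0_iff_eq not_less_eq_eq numeral_2_eq_2 fV)
    obtain y where y: "y \<in> nbrs V E x" using tree_has_neighbour[OF t x z] by blast
    moreover have "nbrs V E x \<noteq> {y}" using no_leaf x by blast
    ultimately obtain y' where "y' \<in> nbrs V E x" "y' \<noteq> y" by blast
    then have "card {y, y'} \<le> card (nbrs V E x)"
      using y finite_nbrs[OF fV] by (intro card_mono) auto
    then show ?thesis unfolding degree_nbrs using \<open>y' \<noteq> y\<close> by simp
  qed
  then have "(\<Sum>x\<in>V. real (degree V E x)) \<ge> (\<Sum>x\<in>V. 2)"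
    by (intro sum_mono) simp
  then have "2 * real (card E) \<ge> 2 * real (card V)" using handshake[OF sg] by simp
  then show False using cE c by linarith
qed

text \<open>A walk ending away from a leaf x can be rerouted to avoid x: if it starts at x it
  may start at the unique neighbour y of x instead.\<close>
lemma walk_avoiding_leaf:
  assumes sg: "simple_graph V E" and leaf: "nbrs V E x = {y}"
    and walk: "(adj E)\<^sup>*\<^sup>* a b" and b: "b \<noteq> x"
  shows "(adj {e \<in> E. x \<notin> e})\<^sup>*\<^sup>* (if a = x then y else a) b"
  using walk
proof (induction rule: converse_rtranclp_induct)
  case base
  then show ?case using b by simp
next
  case (step a c)
  have ac: "{a, c} \<in> E" using step.hyps(1) unfolding adj_def .
  have yx: "y \<noteq> x" using leaf simple_graph_no_loop[OF sg, of x] unfolding nbrs_def by auto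
  have nb: "z = y" if "{z, x} \<in> E" for z
    using that leaf simple_graph_edge_in[OF sg that] unfolding nbrs_def by blast
  consider "a = x" | "c = x" | "a \<noteq> x" "c \<noteq> x" by blast
  then show ?case
  proof cases
    case 1
    then show ?thesis using step.IH nb[of c] ac yx by (auto simp: insert_commute)
  next
    case 2
    then show ?thesis using step.IH nb[of a] ac yx by auto
  next
    case 3
    then have "adj {e \<in> E. x \<notin> e} a c" using ac unfolding adj_def by auto
    then show ?thesis using step.IH 3 by (auto intro: converse_rtranclp_into_rtranclp)
  qed
qed

lemma leaf_remove_tree:
  assumes t: "is_tree V E" and x: "x \<in> V" and leaf: "nbrs V E x = {y}" and c: "card V \<ge> 2"
  shows "is_tree (V - {x}) {e \<in> E. x \<notin> e}"
proof -
  define E' where "E' = {e \<in> E. x \<notin> e}"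
  have sg: "simple_graph V E" and fV: "finite V" and cE: "card E = card V - 1"
    and con: "connected_graph V E" using t unfolding is_tree_def simple_graph_def by auto
  have y: "y \<in> V" "{y, x} \<in> E" using leaf unfolding nbrs_def by auto
  have yx: "y \<noteq> x" using y(2) simple_graph_no_loop[OF sg, of x] by auto
  have sg': "simple_graph (V - {x}) E'" using sg unfolding simple_graph_def E'_def by auto
  have removed: "{e \<in> E. x \<in> e} = {{y, x}}"
  proof (intro equalityI subsetI)
    fix e assume e: "e \<in> {e \<in> E. x \<in> e}"
    have "card e = 2" using sg e unfolding simple_graph_def by blast
    then obtain a b where ab: "e = {a, b}" "a \<noteq> b" unfolding card_2_iff by blast
    have "e = {x, if a = x then b else a}" using ab e by auto
    moreover have "(if a = x then b else a) \<in> nbrs V E x"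
      using e ab simple_graph_edge_in[OF sg, of a b] unfolding nbrs_def by (auto simp: insert_commute)
    ultimately show "e \<in> {{y, x}}" using leaf by (auto simp: insert_commute)
  next
    fix e assume "e \<in> {{y, x}}"
    then show "e \<in> {e \<in> E. x \<in> e}" using y by auto
  qed
  have fE: "finite E" using simple_graph_finite_edges[OF sg] .
  have "E = E' \<union> {e \<in> E. x \<in> e}" "E' \<inter> {e \<in> E. x \<in> e} = {}" unfolding E'_def by auto
  then have "card E = card E' + card {e \<in> E. x \<in> e}" using fE by (metis card_Un_disjoint finite_Un)
  then have cE': "card E' = card (V - {x}) - 1" using removed cE c x fV by simp
  have "connected_graph (V - {x}) E'"
    unfolding connected_graph_def
  proof (intro ballI)
    fix a b assume ab: "a \<in> V - {x}" "b \<in> V - {x}"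
    then have "(adj E)\<^sup>*\<^sup>* a b" using con unfolding connected_graph_def by blast
    then have "(adj {e \<in> E. x \<notin> e})\<^sup>*\<^sup>* (if a = x then y else a) b"
      using ab by (intro walk_avoiding_leaf[OF sg leaf]) auto
    then show "(adj E')\<^sup>*\<^sup>* a b" using ab unfolding E'_def by simp
  qed
  moreover have "V - {x} \<noteq> {}" using y yx by blast
  ultimately show ?thesis unfolding is_tree_def E'_def[symmetric] using sg' cE' by simp
qed

text \<open>Every tree is bipartite: colour a leaf opposite to its neighbour and recurse.\<close>
lemma tree_two_colouring:
  assumes "is_tree V E"
  shows "\<exists>c :: 'a \<Rightarrow> bool. \<forall>a b. {a, b} \<in> E \<longrightarrow> c a \<noteq> c b"
  using assms
proof (induction "card V" arbitrary: V E rule: less_induct)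
  case less
  have sg: "simple_graph V E" and fV: "finite V"
    using less.prems unfolding is_tree_def simple_graph_def by auto
  show ?case
  proof (cases "card V \<ge> 2")
    case False
    have "E = {}"
    proof (rule ccontr)
      assume "E \<noteq> {}"
      then obtain e where "e \<in> E" by blast
      then have "e \<subseteq> V" "card e = 2" using sg unfolding simple_graph_def by auto
      then have "card V \<ge> 2" using fV by (metis card_mono)
      then show False using False by simp
    qed
    then show ?thesis by simp
  next
    case True
    obtain x y where xy: "x \<in> V" "nbrs V E x = {y}" using tree_leaf[OF less.prems True] by blast
    have "card (V - {x}) < card V" using xy fV by (meson card_Diff1_less)
    from less.hyps[OF this leaf_remove_tree[OF less.prems xy True]]
    obtain c' :: "'a \<Rightarrow> bool" where c': "\<forall>a b. {a, b} \<in> {e \<in> E. x \<notin> e} \<longrightarrow> c' a \<noteq> c' b"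
      by blast
    define c where "c z = (if z = x then \<not> c' y else c' z)" for z
    have nb: "z = y" if "{z, x} \<in> E" for z
      using that xy(2) simple_graph_edge_in[OF sg that] unfolding nbrs_def by blast
    have "c a \<noteq> c b" if ab: "{a, b} \<in> E" for a b
    proof -
      have "a \<noteq> b" using ab simple_graph_no_loop[OF sg] by auto
      then show ?thesis
        using c' ab nb[of a] nb[of b] unfolding c_def by (auto simp: insert_commute)
    qed
    then show ?thesis by blast
  qed
qed


section \<open>Relocating edges from u to v\<close>

definition adj_avoiding :: "'a set set \<Rightarrow> 'a \<Rightarrow> 'a \<Rightarrow> 'a \<Rightarrow> bool" where
  "adj_avoiding E u a b \<longleftrightarrow> {a, b} \<in> E \<and> a \<noteq> u \<and> b \<noteq> u"

lemma walk_first_step_avoiding: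
  assumes "(adj E)\<^sup>*\<^sup>* u v" "u \<noteq> v"
  shows "\<exists>p. {u, p} \<in> E \<and> (adj_avoiding E u)\<^sup>*\<^sup>* p v"
proof -
  let ?R = "adj_avoiding E u"
  have "?R\<^sup>*\<^sup>* x v \<or> (\<exists>p. {u, p} \<in> E \<and> ?R\<^sup>*\<^sup>* p v)" if "(adj E)\<^sup>*\<^sup>* x v" for x
    using that
  proof (induction rule: converse_rtranclp_induct)
    case base
    then show ?case by simp
  next
    case (step x y)
    have xy: "{x, y} \<in> E" using step.hyps(1) unfolding adj_def .
    show ?case
    proof (cases "?R\<^sup>*\<^sup>* y v")
      case True
      have "y \<noteq> u"
      proof
        assume "y = u"
        with True have "?R\<^sup>*\<^sup>* u v" by simp
        then show False using assms(2) by (cases rule: converse_rtranclpE) (auto simp: adj_avoiding_def)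
      qed
      then show ?thesis
        using xy True converse_rtranclp_into_rtranclp[of ?R x y v] unfolding adj_avoiding_def by blast
    next
      case False
      then show ?thesis using step.IH by blast
    qed
  qed
  from this[OF assms(1)] show ?thesis
  proof
    assume "?R\<^sup>*\<^sup>* u v"
    then show ?thesis using assms(2) by (cases rule: converse_rtranclpE) (auto simp: adj_avoiding_def)
  qed
qed

text \<open>Three cases:
  p = v if u, v are adjacent; p a common neighbour if there is one; otherwise the first
  vertex of a u-v walk.\<close>
lemma relocation_anchor:
  assumes t: "is_tree V E" and uv: "u \<in> V" "v \<in> V" "u \<noteq> v"
  shows "\<exists>p. {u, p} \<in> E \<and> (adj_avoiding E u)\<^sup>*\<^sup>* p v
           \<and> card (nbrs V E u \<inter> insert p (insert v (nbrs V E v))) \<le> degree V E v"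
proof -
  have sg: "simple_graph V E" and fV: "finite V" and con: "connected_graph V E"
    using t unfolding is_tree_def simple_graph_def by auto
  define Nu where "Nu = nbrs V E u"
  define Nv where "Nv = nbrs V E v"
  have fN: "finite Nu" "finite Nv" unfolding Nu_def Nv_def using finite_nbrs[OF fV] by auto
  have u_Nu: "u \<notin> Nu" using simple_graph_no_loop[OF sg, of u] unfolding Nu_def nbrs_def by auto
  have dv: "degree V E v = card Nv" unfolding Nv_def degree_nbrs ..
  have "Nv \<noteq> {}" using tree_has_neighbour[OF t uv(2,1)] uv(3) unfolding Nv_def by blast
  then have dv_pos: "card Nv \<ge> 1" using fN(2) by (simp add: Suc_le_eq card_gt_0_iff)
  show ?thesis
  proof (cases "{u, v} \<in> E")
    case True
    then have u_Nv: "u \<in> Nv" using uv unfolding Nv_def nbrs_def by simp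
    have "Nu \<inter> insert v (insert v Nv) \<subseteq> insert v (Nv - {u})" using u_Nu by auto
    then have "card (Nu \<inter> insert v (insert v Nv)) \<le> card (insert v (Nv - {u}))"
      using fN by (intro card_mono) auto
    also have "\<dots> \<le> card Nv"
      using fN(2) u_Nv dv_pos by (simp add: card_insert_if card_Diff_singleton)
    finally have "card (nbrs V E u \<inter> insert v (insert v (nbrs V E v))) \<le> degree V E v"
      unfolding dv Nu_def Nv_def .
    with True show ?thesis by (intro exI[of _ v] conjI rtranclp.rtrancl_refl)
  next
    case False
    then have v_Nu: "v \<notin> Nu" unfolding Nu_def nbrs_def by (auto simp: insert_commute)
    show ?thesis
    proof (cases "Nu \<inter> Nv = {}")
      case False
      then obtain z where z: "z \<in> Nu" "z \<in> Nv" by blast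
      have "z \<noteq> u" using z u_Nu by auto
      then have "(adj_avoiding E u)\<^sup>*\<^sup>* z v"
        using z uv(3) unfolding Nv_def nbrs_def adj_avoiding_def by (intro r_into_rtranclp) simp
      moreover have "{u, z} \<in> E" using z unfolding Nu_def nbrs_def by (simp add: insert_commute)
      moreover have "Nu \<inter> insert z (insert v Nv) \<subseteq> Nv" using z v_Nu by auto
      then have "card (Nu \<inter> insert z (insert v Nv)) \<le> degree V E v"
        unfolding dv using fN by (intro card_mono) auto
      ultimately show ?thesis unfolding Nu_def Nv_def by (intro exI[of _ z] conjI)
    next
      case True
      have "(adj E)\<^sup>*\<^sup>* u v" using con uv unfolding connected_graph_def by blast
      from walk_first_step_avoiding[OF this uv(3)]
      obtain p where p: "{u, p} \<in> E" "(adj_avoiding E u)\<^sup>*\<^sup>* p v" by blast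
      have "Nu \<inter> insert p (insert v Nv) \<subseteq> {p}" using True v_Nu by auto
      then have "card (Nu \<inter> insert p (insert v Nv)) \<le> card {p}" by (intro card_mono) auto
      then have "card (Nu \<inter> insert p (insert v Nv)) \<le> degree V E v" using dv dv_pos by simp
      with p show ?thesis unfolding Nu_def Nv_def by (intro exI[of _ p] conjI)
    qed
  qed
qed

lemma relocation_data_exists:
  assumes t: "is_tree V E" and uv: "u \<in> V" "v \<in> V" "u \<noteq> v"
  shows "\<exists>p W. {u, p} \<in> E \<and> (adj_avoiding E u)\<^sup>*\<^sup>* p v \<and> W \<subseteq> nbrs V E u \<and> p \<notin> W
     \<and> v \<notin> W \<and> W \<inter> nbrs V E v = {} \<and> card W = degree V E u - degree V E v"
proof -
  have fV: "finite V" using t unfolding is_tree_def simple_graph_def by auto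
  obtain p where p: "{u, p} \<in> E" "(adj_avoiding E u)\<^sup>*\<^sup>* p v"
    and small: "card (nbrs V E u \<inter> insert p (insert v (nbrs V E v))) \<le> degree V E v"
    using relocation_anchor[OF t uv] by blast
  define C where "C = nbrs V E u - insert p (insert v (nbrs V E v))"
  have "card C = degree V E u - card (nbrs V E u \<inter> insert p (insert v (nbrs V E v)))"
    unfolding C_def degree_nbrs using finite_nbrs[OF fV] by (intro card_Diff_subset_Int) auto
  then have "degree V E u - degree V E v \<le> card C" using small by simp
  then obtain W where "W \<subseteq> C" "card W = degree V E u - degree V E v"
    by (rule obtain_subset_with_card_n)
  then show ?thesis using p unfolding C_def by blast
qed

definition relocate :: "'a set set \<Rightarrow> 'a \<Rightarrow> 'a \<Rightarrow> 'a set \<Rightarrow> 'a set set" where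
  "relocate E u v W = (E - (\<lambda>w. {u, w}) ` W) \<union> (\<lambda>w. {v, w}) ` W"

lemma degree_seq_permuted:
  assumes "finite V" "bij_betw \<sigma> V V" "\<And>x. x \<in> V \<Longrightarrow> degree V E' x = degree V E (\<sigma> x)"
  shows "degree_seq V E' = degree_seq V E"
proof -
  have "degree_seq V E' = image_mset (degree V E \<circ> \<sigma>) (mset_set V)"
    unfolding degree_seq_def using assms(1,3) by (intro image_mset_cong) simp
  also have "\<dots> = image_mset (degree V E) (image_mset \<sigma> (mset_set V))"
    by (simp add: multiset.map_comp)
  also have "image_mset \<sigma> (mset_set V) = mset_set V"
    using assms(2) image_mset_mset_set[of \<sigma> V] unfolding bij_betw_def by simp
  finally show ?thesis unfolding degree_seq_def .
qed

locale edge_relocation =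
  fixes V :: "'a set" and E :: "'a set set" and u v :: 'a and W :: "'a set"
  assumes simple: "simple_graph V E" and u: "u \<in> V" and v: "v \<in> V" and uv: "u \<noteq> v"
    and W_nbrs: "W \<subseteq> nbrs V E u" and v_notin_W: "v \<notin> W" and W_nbrs_v: "W \<inter> nbrs V E v = {}"
begin

lemma finite_V: "finite V"
  using simple unfolding simple_graph_def by simp

lemma u_notin_W: "u \<notin> W"
  using W_nbrs simple_graph_no_loop[OF simple, of u] unfolding nbrs_def by auto

lemma W_subset_V: "W \<subseteq> V"
  using W_nbrs unfolding nbrs_def by auto

lemma finite_W: "finite W"
  using W_nbrs finite_nbrs[OF finite_V] by (rule finite_subset)

lemma mem_relocate:
  "{z, x} \<in> relocate E u v W \<longleftrightarrow>
     ({z, x} \<in> E \<and> \<not> (z = u \<and> x \<in> W) \<and> \<not> (x = u \<and> z \<in> W)) \<or> (z = v \<and> x \<in> W) \<or> (x = v \<and> z \<in> W)"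
proof -
  have "{z, x} \<in> (\<lambda>w. {u, w}) ` W \<longleftrightarrow> (z = u \<and> x \<in> W) \<or> (x = u \<and> z \<in> W)"
    using u_notin_W by (auto simp: doubleton_eq_iff)
  moreover have "{z, x} \<in> (\<lambda>w. {v, w}) ` W \<longleftrightarrow> (z = v \<and> x \<in> W) \<or> (x = v \<and> z \<in> W)"
    using v_notin_W by (auto simp: doubleton_eq_iff)
  ultimately show ?thesis unfolding relocate_def by blast
qed

lemma simple_graph_relocate: "simple_graph V (relocate E u v W)"
  unfolding simple_graph_def
proof (intro conjI[OF finite_V] ballI)
  fix e assume "e \<in> relocate E u v W"
  then consider "e \<in> E" | w where "w \<in> W" "e = {v, w}" unfolding relocate_def by blast
  then show "e \<subseteq> V \<and> card e = 2"
  proof cases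
    case 1
    then show ?thesis using simple unfolding simple_graph_def by blast
  next
    case 2
    then have "w \<noteq> v" using v_notin_W by auto
    then show ?thesis using 2 W_subset_V v by auto
  qed
qed

text \<open>The removed edges all lie in E and the added ones are new, so |E| is unchanged.\<close>
lemma card_relocate: "card (relocate E u v W) = card E"
proof -
  let ?A = "(\<lambda>w. {u, w}) ` W" and ?B = "(\<lambda>w. {v, w}) ` W"
  have fE: "finite E" using simple_graph_finite_edges[OF simple] .
  have AE: "?A \<subseteq> E" using W_nbrs unfolding nbrs_def by (auto simp: insert_commute)
  have BE: "?B \<inter> E = {}"
    using W_nbrs_v W_subset_V unfolding nbrs_def by (auto simp: insert_commute)
  have "card ?A = card W" "card ?B = card W"
    using u_notin_W v_notin_W by (auto intro!: card_image simp: inj_on_def doubleton_eq_iff)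
  moreover have "card (relocate E u v W) = card (E - ?A) + card ?B"
    unfolding relocate_def using fE finite_W BE by (intro card_Un_disjoint) auto
  moreover have "card (E - ?A) = card E - card ?A" using AE finite_W by (simp add: card_Diff_subset)
  ultimately show ?thesis using card_mono[OF fE AE] by simp
qed

text \<open>u loses the |W| neighbours in W, v gains them, and each w \<in> W swaps u for v.\<close>
lemma degree_relocate:
  assumes x: "x \<in> V"
  shows "degree V (relocate E u v W) x =
    (if x = u then degree V E u - card W else if x = v then degree V E v + card W else degree V E x)"
proof -
  let ?N' = "nbrs V (relocate E u v W)"
  have fN: "finite (nbrs V E y)" for y using finite_nbrs[OF finite_V] .
  consider "x = u" | "x = v" | "x \<in> W" | "x \<noteq> u" "x \<noteq> v" "x \<notin> W" by blast
  then show ?thesis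
  proof cases
    case 1
    then have "?N' x = nbrs V E u - W"
      using uv u_notin_W unfolding nbrs_def mem_relocate by auto
    then show ?thesis using 1 W_nbrs finite_W by (simp add: degree_nbrs card_Diff_subset)
  next
    case 2
    then have "?N' x = nbrs V E v \<union> W"
      using uv u_notin_W v_notin_W W_subset_V unfolding nbrs_def mem_relocate by auto
    then show ?thesis
      using 2 uv W_nbrs_v fN finite_W by (simp add: degree_nbrs card_Un_disjoint Int_commute)
  next
    case 3
    have u_N: "u \<in> nbrs V E x" using 3 W_nbrs u unfolding nbrs_def by (auto simp: insert_commute)
    have v_N: "v \<notin> nbrs V E x"
      using 3 W_nbrs_v W_subset_V unfolding nbrs_def by (auto simp: insert_commute)
    have "?N' x = insert v (nbrs V E x - {u})"
      using 3 u_notin_W v_notin_W uv u v unfolding nbrs_def mem_relocate by auto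
    moreover have "card (nbrs V E x) > 0" using u_N fN card_gt_0_iff by blast
    ultimately have "card (?N' x) = card (nbrs V E x)"
      using fN u_N v_N by (simp add: card_Diff_singleton)
    moreover have "x \<noteq> u" "x \<noteq> v" using 3 u_notin_W v_notin_W by auto
    ultimately show ?thesis by (simp add: degree_nbrs)
  next
    case 4
    then have "?N' x = nbrs V E x" unfolding nbrs_def mem_relocate by auto
    then show ?thesis using 4 by (simp add: degree_nbrs)
  qed
qed

text \<open>If exactly d(u) - d(v) edges are moved, the degrees of u and v are swapped.\<close>
lemma degree_seq_relocate:
  assumes "card W = degree V E u - degree V E v" "degree V E v \<le> degree V E u"
  shows "degree_seq V (relocate E u v W) = degree_seq V E"
proof (rule degree_seq_permuted[OF finite_V])
  show "bij_betw (transpose u v) V V" using u v by (simp add: bij_betw_def)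
  show "degree V (relocate E u v W) x = degree V E (transpose u v x)" if "x \<in> V" for x
    using degree_relocate[OF that] assms uv by (auto simp: transpose_def)
qed

text \<open>Connectivity survives: u still reaches v through its anchor neighbour p \<notin> W along a
  walk avoiding u (hence avoiding all removed edges), and each w \<in> W hangs on v.\<close>
lemma connected_relocate:
  assumes con: "connected_graph V E"
    and p: "{u, p} \<in> E" "p \<notin> W" "(adj_avoiding E u)\<^sup>*\<^sup>* p v"
  shows "connected_graph V (relocate E u v W)"
proof -
  let ?E' = "relocate E u v W"
  have kept: "(adj ?E')\<^sup>*\<^sup>* a b" if "(adj_avoiding E u)\<^sup>*\<^sup>* a b" for a b
    using that
  proof (induction rule: rtranclp_induct)
    case (step y z)
    then have "adj ?E' y z" unfolding adj_def adj_avoiding_def mem_relocate by auto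
    with step.IH show ?case by (rule rtranclp.rtrancl_into_rtrancl)
  qed simp
  have "adj ?E' u p" using p(1,2) uv unfolding adj_def mem_relocate by auto
  then have u_v: "(adj ?E')\<^sup>*\<^sup>* u v" using kept[OF p(3)] by (rule converse_rtranclp_into_rtranclp)
  have edge: "(adj ?E')\<^sup>*\<^sup>* a b" if ab: "{a, b} \<in> E" for a b
  proof (cases "(a = u \<and> b \<in> W) \<or> (b = u \<and> a \<in> W)")
    case False
    then have "adj ?E' a b" using ab unfolding adj_def mem_relocate by auto
    then show ?thesis by (rule r_into_rtranclp)
  next
    case True
    then obtain w where w: "w \<in> W" "{a, b} = {u, w}" by (auto simp: insert_commute)
    have "adj ?E' v w" using w(1) unfolding adj_def mem_relocate by auto
    with u_v have "(adj ?E')\<^sup>*\<^sup>* u w" by (rule rtranclp.rtrancl_into_rtrancl)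
    then show ?thesis using w(2) adj_rtranclp_sym by (auto simp: doubleton_eq_iff)
  qed
  show ?thesis
    unfolding connected_graph_def
  proof (intro ballI)
    fix x y assume "x \<in> V" "y \<in> V"
    then have "(adj E)\<^sup>*\<^sup>* x y" using con unfolding connected_graph_def by blast
    then show "(adj ?E')\<^sup>*\<^sup>* x y"
    proof (induction rule: rtranclp_induct)
      case (step y z)
      then show ?case using edge[of y z] unfolding adj_def by (meson rtranclp_trans)
    qed simp
  qed
qed

lemma tree_relocate:
  assumes t: "is_tree V E" and p: "{u, p} \<in> E" "p \<notin> W" "(adj_avoiding E u)\<^sup>*\<^sup>* p v"
  shows "is_tree V (relocate E u v W)"
  using t simple_graph_relocate card_relocate connected_relocate[OF _ p]
  unfolding is_tree_def by simp

lemma edge_energy_relocate: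
  "edge_energy (relocate E u v W) a
     = edge_energy E a + (\<Sum>w\<in>W. (a v + a w)^2 - (a u + a w)^2)"
proof -
  let ?A = "(\<lambda>w. {u, w}) ` W" and ?B = "(\<lambda>w. {v, w}) ` W"
  let ?s = "\<lambda>e. (\<Sum>z\<in>e. a z)^2"
  have fE: "finite E" using simple_graph_finite_edges[OF simple] .
  have AE: "?A \<subseteq> E" using W_nbrs unfolding nbrs_def by (auto simp: insert_commute)
  have BE: "(E - ?A) \<inter> ?B = {}"
    using W_nbrs_v W_subset_V unfolding nbrs_def by (auto simp: insert_commute)
  have star_sum: "sum ?s ((\<lambda>w. {x, w}) ` W) = (\<Sum>w\<in>W. (a x + a w)^2)" if x: "x \<notin> W" for x
  proof -
    have "inj_on (\<lambda>w. {x, w}) W" using x by (auto simp: inj_on_def doubleton_eq_iff)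
    then have "sum ?s ((\<lambda>w. {x, w}) ` W) = (\<Sum>w\<in>W. ?s {x, w})" by (rule sum.reindex_cong) auto
    also have "\<dots> = (\<Sum>w\<in>W. (a x + a w)^2)"
    proof (rule sum.cong)
      fix w assume "w \<in> W"
      then have "w \<noteq> x" using x by auto
      then show "?s {x, w} = (a x + a w)^2" by simp
    qed simp
    finally show ?thesis .
  qed
  note sA = star_sum[OF u_notin_W] and sB = star_sum[OF v_notin_W]
  have "edge_energy (relocate E u v W) a = sum ?s (E - ?A) + sum ?s ?B"
    unfolding edge_energy_def relocate_def using fE finite_W BE by (intro sum.union_disjoint) auto
  also have "sum ?s (E - ?A) = edge_energy E a - sum ?s ?A"
    unfolding edge_energy_def using fE AE by (rule sum_diff)
  finally show ?thesis using sA sB by (simp add: sum_subtractf)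
qed

lemma edge_energy_relocate_increases:
  assumes "W \<noteq> {}" and nonneg: "\<And>x. a x \<ge> 0" and "a u < a v"
  shows "edge_energy E a < edge_energy (relocate E u v W) a"
proof -
  have "(\<Sum>w\<in>W. (a v + a w)^2 - (a u + a w)^2) > 0"
  proof (rule sum_pos[OF finite_W \<open>W \<noteq> {}\<close>])
    show "(a v + a w)^2 - (a u + a w)^2 > 0" for w
      using assms(3) nonneg[of u] nonneg[of w] power_strict_mono[of "a u + a w" "a v + a w" 2]
      by simp
  qed
  then show ?thesis unfolding edge_energy_relocate by simp
qed

end


theorem lemma7:
  fixes V :: "'a set" and E :: "'a set set" and f :: "'a \<Rightarrow> real" and u v :: 'a
  assumes "extremal_tree V E"
    and "lap_eigenvector V E (lap_lambda V E) f"
    and "u \<in> V" and "v \<in> V"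
    and "\<bar>f v\<bar> > \<bar>f u\<bar>"
  shows "degree V E v \<ge> degree V E u"
proof (rule ccontr)
  assume "\<not> ?thesis"
  then have deg: "degree V E v < degree V E u" by simp
  have t: "is_tree V E" and sg: "simple_graph V E"
    and extremal: "\<And>E'. is_tree V E' \<Longrightarrow> degree_seq V E' = degree_seq V E
                          \<Longrightarrow> lap_lambda V E' \<le> lap_lambda V E"
    using assms(1) unfolding extremal_tree_def is_tree_def by auto
  have uv: "u \<noteq> v" using assms(5) by auto
  obtain p W where p: "{u, p} \<in> E" "(adj_avoiding E u)\<^sup>*\<^sup>* p v" "p \<notin> W"
    and W: "W \<subseteq> nbrs V E u" "v \<notin> W" "W \<inter> nbrs V E v = {}"
      "card W = degree V E u - degree V E v"
    using relocation_data_exists[OF t assms(3,4) uv] by blast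
  interpret R: edge_relocation V E u v W using sg assms(3,4) uv W(1-3) by unfold_locales
  define E' where "E' = relocate E u v W"
  have t': "is_tree V E'" using R.tree_relocate[OF t p(1,3,2)] unfolding E'_def .
  then have sg': "simple_graph V E'" and ne: "V \<noteq> {}" unfolding is_tree_def by auto
  obtain c :: "'a \<Rightarrow> bool" where c: "\<And>x y. {x, y} \<in> E' \<Longrightarrow> c x \<noteq> c y"
    using tree_two_colouring[OF t'] by metis
  define a where "a x = \<bar>f x\<bar>" for x
  define g where "g x = (if c x then a x else - a x)" for x
  have "W \<noteq> {}" using W(4) deg by auto
  text \<open>The chain  \<lambda>(T) |f|^2 \<le> S(E) < S(E') \<le> \<lambda>(T') |f|^2 \<le> \<lambda>(T) |f|^2.\<close>
  have "lap_lambda V E * sq_norm V f = quad_form V (laplacian V E) f"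
    using eigvec_quad_form assms(2) unfolding lap_eigenvector_eigvec by metis
  also have "\<dots> \<le> edge_energy E a" unfolding a_def by (rule laplacian_quad_form_le_energy[OF sg])
  also have "\<dots> < edge_energy E' a"
    unfolding E'_def a_def using \<open>W \<noteq> {}\<close> assms(5) by (intro R.edge_energy_relocate_increases) auto
  also have "\<dots> = quad_form V (laplacian V E') g"
    unfolding g_def by (rule laplacian_quad_form_signed[OF sg' c, symmetric])
  also have "\<dots> \<le> lap_lambda V E' * sq_norm V g"
    by (rule laplacian_rayleigh[OF sg' ne])
  also have "\<dots> \<le> lap_lambda V E * sq_norm V f"
  proof -
    have "(g x)^2 = (f x)^2" for x unfolding g_def a_def by simp
    then have "sq_norm V g = sq_norm V f" unfolding sq_norm_def by simp
    moreover have "lap_lambda V E' \<le> lap_lambda V E"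
      using extremal[OF t'] R.degree_seq_relocate W(4) deg unfolding E'_def by simp
    ultimately show ?thesis by (simp add: mult_right_mono sq_norm_nonneg)
  qed
  finally show False by simp
qed

end
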